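(* Let $n\le d$, let $\{u_i\}_{i=1}^n$ be an orthonormal family in $\mathbb{C}^d$, let $\{e_i\}$ be the standard basis of $\mathbb{C}^n$, and let $K=\sum_{i=1}^n|e_i\rangle\langle u_i\otimes\overline{u_i}|$. If $\rho$ is a separable bipartite PSD matrix on $\mathbb{C}^d\otimes\mathbb{C}^d$ whose range is contained in the symmetric subspace $\mathbb{C}^d\vee\mathbb{C}^d$, then $Z^\Gamma_K(\rho)=K\rho^\Gamma K^*\in\operatorname{R}_1[\mathsf{DNN}_n]$.
   Context: $\rho^\Gamma$ is the partial transpose on the second factor (standard basis), $\overline{u}$ is entrywise complex conjugation. A bipartite PSD $\rho$ is separable if it is a finite sum $\sum_k|v_k\rangle\langle v_k|\otimes|w_k\rangle\langle w_k|$. The symmetric subspace $\mathbb{C}^d\vee\mathbb{C}^d$ is the $+1$ eigenspace of the flip operator $F=\sum_{i,j}|ij\rangle\langle ji|$. $\mathsf{DNN}_n$ is the cone of $n\times n$ PSD matrices with entrywise nonnegative entries, and $\operatorname{R}_1[\mathsf{DNN}_n]$ is the convex cone generated by the rank-1 matrices in $\mathsf{DNN}_n$. *)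

theory Defs
  imports "Jordan_Normal_Form.Schur_Decomposition" "Jordan_Normal_Form.DL_Rank"
begin

text \<open>Conventions: \<open>\<complex>^d \<otimes> \<complex>^d\<close> is \<open>\<complex>^(d*d)\<close> with basis vector
  \<open>|i j>\<close> at index \<open>i*d + j\<close> (lexicographic order).\<close>

definition cnonneg :: "complex \<Rightarrow> bool" where
  "cnonneg z \<longleftrightarrow> z \<in> \<real> \<and> 0 \<le> Re z"

definition psd_mat :: "nat \<Rightarrow> complex mat \<Rightarrow> bool" where
  "psd_mat n A \<longleftrightarrow> A \<in> carrier_mat n n \<and> A = mat_adjoint A \<and>
     (\<forall>v \<in> carrier_vec n. cnonneg (scalar_prod (conjugate v) (A *\<^sub>v v)))"

definition tensor_vec :: "complex vec \<Rightarrow> complex vec \<Rightarrow> complex vec" where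
  "tensor_vec v w = vec (dim_vec v * dim_vec w)
     (\<lambda>k. v $ (k div dim_vec w) * w $ (k mod dim_vec w))"

definition kron_mat :: "complex mat \<Rightarrow> complex mat \<Rightarrow> complex mat" where
  "kron_mat A B = mat (dim_row A * dim_row B) (dim_col A * dim_col B)
     (\<lambda>(r, c). A $$ (r div dim_row B, c div dim_col B) * B $$ (r mod dim_row B, c mod dim_col B))"

definition outer :: "complex vec \<Rightarrow> complex vec \<Rightarrow> complex mat" where
  "outer v w = mat (dim_vec v) (dim_vec w) (\<lambda>(i, j). v $ i * cnj (w $ j))"

definition separable :: "nat \<Rightarrow> complex mat \<Rightarrow> bool" where
  "separable d \<rho> \<longleftrightarrow> (\<exists>vws :: (complex vec \<times> complex vec) list.
     (\<forall>(v, w) \<in> set vws. v \<in> carrier_vec d \<and> w \<in> carrier_vec d) \<and>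
     \<rho> = foldr (+) (map (\<lambda>(v, w). kron_mat (outer v v) (outer w w)) vws) (0\<^sub>m (d*d) (d*d)))"

text \<open>Partial transpose on the second factor:
  \<open>\<rho>^\<Gamma>(ij, kl) = \<rho>(il, kj)\<close>.\<close>
definition ptrans :: "nat \<Rightarrow> complex mat \<Rightarrow> complex mat" where
  "ptrans d \<rho> = mat (d*d) (d*d)
     (\<lambda>(r, c). \<rho> $$ ((r div d) * d + c mod d, (c div d) * d + r mod d))"

definition flip_mat :: "nat \<Rightarrow> complex mat" where
  "flip_mat d = mat (d*d) (d*d) (\<lambda>(r, c). if r = (c mod d) * d + c div d then 1 else 0)"

text \<open>Range of \<rho> contained in the symmetric subspace (+1 eigenspace of F).\<close>
definition range_in_sym :: "nat \<Rightarrow> complex mat \<Rightarrow> bool" where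
  "range_in_sym d \<rho> \<longleftrightarrow> (\<forall>x \<in> carrier_vec (d*d). flip_mat d *\<^sub>v (\<rho> *\<^sub>v x) = \<rho> *\<^sub>v x)"

definition DNN :: "nat \<Rightarrow> complex mat set" where
  "DNN n = {A. psd_mat n A \<and> (\<forall>i < n. \<forall>j < n. cnonneg (A $$ (i, j)))}"

definition R1_DNN :: "nat \<Rightarrow> complex mat set" where
  "R1_DNN n = {A. \<exists>Ms :: (real \<times> complex mat) list.
     (\<forall>(c, M) \<in> set Ms. c \<ge> 0 \<and> M \<in> DNN n \<and> vec_space.rank n M = 1) \<and>
     A = foldr (+) (map (\<lambda>(c, M). complex_of_real c \<cdot>\<^sub>m M) Ms) (0\<^sub>m n n)}"

text \<open>\<open>K = \<Sum>_i |e_i><u_i \<otimes> conj u_i|\<close>, an n x d^2 matrix.\<close>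
definition K_mat :: "nat \<Rightarrow> nat \<Rightarrow> (nat \<Rightarrow> complex vec) \<Rightarrow> complex mat" where
  "K_mat n d u = mat n (d*d) (\<lambda>(i, c). cnj (tensor_vec (u i) (conjugate (u i)) $ c))"

end

theory Submission
  imports Defs
begin

text \<open>Write \<open>\<rho> = \<Sum>\<^sub>k x\<^sub>k x\<^sub>k\<^sup>*\<close> with product vectors \<open>x\<^sub>k = v\<^sub>k \<otimes> w\<^sub>k\<close>. Since
  \<open>F\<rho> = \<rho>\<close>, the rows \<open>ij\<close> and \<open>ji\<close> of \<open>\<rho>\<close> agree, and expanding
  \<open>\<Sum>\<^sub>k |x\<^sub>k(ij) - x\<^sub>k(ji)|\<^sup>2\<close> shows that every \<open>x\<^sub>k\<close> is itself symmetric. A symmetric product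
  vector has \<open>w\<^sub>k\<close> proportional to \<open>v\<^sub>k\<close> (or \<open>v\<^sub>k = 0\<close>), so \<open>v\<^sub>k \<otimes> conj w\<^sub>k\<close> is a multiple of
  \<open>v\<^sub>k \<otimes> conj v\<^sub>k\<close>, and \<open>K (v\<^sub>k \<otimes> conj v\<^sub>k)\<close> has the nonnegative entries \<open>|\<langle>u\<^sub>i, v\<^sub>k\<rangle>|\<^sup>2\<close>.
  Hence every term of \<open>K \<rho>\<^sup>\<Gamma> K\<^sup>* = \<Sum>\<^sub>k K (v\<^sub>k \<otimes> conj w\<^sub>k)(v\<^sub>k \<otimes> conj w\<^sub>k)\<^sup>* K\<^sup>*\<close> is a
  nonnegative multiple of a rank-one doubly nonnegative matrix, or zero.\<close>

lemma mat_adjoint_dims [simp]: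
  "dim_row (mat_adjoint A) = dim_col A" "dim_col (mat_adjoint A) = dim_row A"
  unfolding mat_adjoint_def by auto

lemma mat_adjoint_index [simp]:
  "i < dim_col A \<Longrightarrow> j < dim_row A \<Longrightarrow> mat_adjoint A $$ (i, j) = cnj (A $$ (j, i))"
  unfolding mat_adjoint_def by (simp add: mat_of_rows_index)

lemma mat_adjoint_carrier: "A \<in> carrier_mat n m \<Longrightarrow> mat_adjoint A \<in> carrier_mat m n"
  by auto

lemma outer_dims [simp]: "dim_row (outer v w) = dim_vec v" "dim_col (outer v w) = dim_vec w"
  unfolding outer_def by auto

lemma outer_index [simp]:
  "i < dim_vec v \<Longrightarrow> j < dim_vec w \<Longrightarrow> outer v w $$ (i, j) = v $ i * cnj (w $ j)"
  unfolding outer_def by auto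

lemma outer_carrier: "v \<in> carrier_vec n \<Longrightarrow> w \<in> carrier_vec m \<Longrightarrow> outer v w \<in> carrier_mat n m"
  by auto

lemma outer_smult: "outer (a \<cdot>\<^sub>v v) (b \<cdot>\<^sub>v w) = (a * cnj b) \<cdot>\<^sub>m outer v w"
  by (rule eq_matI) (auto simp: mult_ac)

lemma mult_outer_mult_adjoint:
  assumes K: "K \<in> carrier_mat n N" and x: "x \<in> carrier_vec N"
  shows "K * outer x x * mat_adjoint K = outer (K *\<^sub>v x) (K *\<^sub>v x)"
proof (rule eq_matI)
  fix i j assume "i < dim_row (outer (K *\<^sub>v x) (K *\<^sub>v x))" "j < dim_col (outer (K *\<^sub>v x) (K *\<^sub>v x))"
  then have i: "i < n" and j: "j < n" using K by auto
  have "(K * outer x x * mat_adjoint K) $$ (i, j) =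
      (\<Sum>c<N. (\<Sum>r<N. K $$ (i, r) * (x $ r * cnj (x $ c))) * cnj (K $$ (j, c)))"
    using i j K x by (simp add: scalar_prod_def atLeast0LessThan)
  also have "\<dots> = (\<Sum>r<N. K $$ (i, r) * x $ r) * cnj (\<Sum>c<N. K $$ (j, c) * x $ c)"
    by (simp add: sum_distrib_left sum_distrib_right mult_ac)
  also have "\<dots> = outer (K *\<^sub>v x) (K *\<^sub>v x) $$ (i, j)"
    using i j K x by (simp add: scalar_prod_def atLeast0LessThan)
  finally show "(K * outer x x * mat_adjoint K) $$ (i, j) = outer (K *\<^sub>v x) (K *\<^sub>v x) $$ (i, j)" .
qed (use K in auto)

lemma outer_psd:
  assumes z: "z \<in> carrier_vec n"
  shows "psd_mat n (outer z z)"
  unfolding psd_mat_def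
proof (intro conjI ballI)
  show "outer z z = mat_adjoint (outer z z)"
    by (rule eq_matI) auto
next
  fix v :: "complex vec" assume v: "v \<in> carrier_vec n"
  define s where "s = (\<Sum>j<n. cnj (z $ j) * v $ j)"
  have "conjugate v \<bullet> (outer z z *\<^sub>v v) = (\<Sum>i<n. cnj (v $ i) * (\<Sum>j<n. z $ i * cnj (z $ j) * v $ j))"
    using z v by (simp add: scalar_prod_def atLeast0LessThan)
  also have "\<dots> = cnj s * s"
    by (simp add: s_def sum_distrib_left sum_distrib_right mult_ac)
  also have "\<dots> = complex_of_real ((cmod s)\<^sup>2)"
    by (metis complex_norm_square mult.commute)
  finally show "cnonneg (conjugate v \<bullet> (outer z z *\<^sub>v v))"
    by (simp add: cnonneg_def)
qed (use z in auto)

lemma rank_ge_1_if_col_nonzero: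
  fixes A :: "complex mat"
  assumes A: "A \<in> carrier_mat n n" and c: "c < n" and nz: "col A c \<noteq> 0\<^sub>v n"
  shows "vec_space.rank n A \<ge> 1"
proof -
  interpret V: vec_space "TYPE(complex)" n .
  have cc: "col A c \<in> carrier_vec n" using A c by auto
  have "V.lin_indpt {}"
    unfolding V.lin_dep_def by auto
  then have "col A c \<in> V.span {} \<longleftrightarrow> V.lin_dep ({} \<union> {col A c})"
    by (intro V.lin_dep_iff_in_span) (use cc in auto)
  moreover have "col A c \<notin> V.span {}" using nz V.span_empty by auto
  ultimately have "V.lin_indpt {col A c}" by simp
  then have "card {col A c} \<le> V.rank A"
    by (intro V.rank_ge_card_indpt[OF A]) (use A c in \<open>auto simp: cols_def\<close>)
  then show ?thesis by simp
qed

lemma rank_outer_self: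
  assumes z: "z \<in> carrier_vec n" and nz: "z \<noteq> 0\<^sub>v n"
  shows "vec_space.rank n (outer z z) = 1"
proof -
  have Z: "outer z z \<in> carrier_mat n n" using z by auto
  have "\<exists>i<n. z $ i \<noteq> 0"
  proof (rule ccontr)
    assume "\<not> (\<exists>i<n. z $ i \<noteq> 0)"
    then have "z = 0\<^sub>v n" using z by (intro eq_vecI) auto
    with nz show False ..
  qed
  then obtain i where i: "i < n" "z $ i \<noteq> 0" by blast
  have "col (outer z z) i $ i \<noteq> 0" using i z by simp
  then have "col (outer z z) i \<noteq> 0\<^sub>v n" using i by auto
  then have "vec_space.rank n (outer z z) \<ge> 1"
    by (rule rank_ge_1_if_col_nonzero[OF Z i(1)])
  moreover have "vec_space.rank n (outer z z) \<le> 1"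
    by (rule vec_space.rank_le_1_product_entries[OF Z, of "\<lambda>r. z $ r" "\<lambda>c. cnj (z $ c)"])
      (use z in auto)
  ultimately show ?thesis by simp
qed

lemma foldr_add_carrier:
  "\<forall>x\<in>set xs. f x \<in> carrier_mat m m' \<Longrightarrow> foldr (+) (map f xs) (0\<^sub>m m m') \<in> carrier_mat m m'"
  by (induction xs) auto

lemma foldr_add_index:
  assumes "\<forall>x\<in>set xs. f x \<in> carrier_mat m m'" and "i < m" "j < m'"
  shows "foldr (+) (map f xs) (0\<^sub>m m m') $$ (i, j) = sum_list (map (\<lambda>x. f x $$ (i, j)) xs)"
  using assms
proof (induction xs)
  case (Cons a xs)
  then have "foldr (+) (map f xs) (0\<^sub>m m m') \<in> carrier_mat m m'"
    by (simp add: foldr_add_carrier)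
  with Cons show ?case by simp
qed simp

lemma foldr_add_init:
  fixes f :: "'a \<Rightarrow> 'b::monoid_add mat"
  assumes "\<forall>x\<in>set xs. f x \<in> carrier_mat m m'" and "B \<in> carrier_mat m m'"
  shows "foldr (+) (map f xs) B = foldr (+) (map f xs) (0\<^sub>m m m') + B"
  using assms
proof (induction xs)
  case (Cons a xs)
  then have "foldr (+) (map f xs) (0\<^sub>m m m') \<in> carrier_mat m m'" "f a \<in> carrier_mat m m'"
    by (simp_all add: foldr_add_carrier)
  with Cons show ?case
    using assoc_add_mat[of "f a" m m' "foldr (+) (map f xs) (0\<^sub>m m m')" B] by simp
qed simp

lemma mult_foldr_add_mult_adjoint:
  assumes K: "K \<in> carrier_mat n N" and f: "\<forall>x\<in>set xs. f x \<in> carrier_mat N N"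
  shows "K * foldr (+) (map f xs) (0\<^sub>m N N) * mat_adjoint K
    = foldr (+) (map (\<lambda>x. K * f x * mat_adjoint K) xs) (0\<^sub>m n n)"
  using f
proof (induction xs)
  case Nil
  show ?case using K by simp
next
  case (Cons a xs)
  let ?F = "foldr (+) (map f xs) (0\<^sub>m N N)"
  have fa: "f a \<in> carrier_mat N N" and F: "?F \<in> carrier_mat N N"
    using Cons.prems by (auto simp: foldr_add_carrier)
  have "K * (f a + ?F) * mat_adjoint K = (K * f a + K * ?F) * mat_adjoint K"
    using K fa F by (simp add: mult_add_distrib_mat)
  also have "\<dots> = K * f a * mat_adjoint K + K * ?F * mat_adjoint K"
    using K fa F by (simp add: add_mult_distrib_mat[of _ n N _ _ n] mat_adjoint_carrier)
  finally show ?case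
    using Cons by simp
qed

lemma pair_index_less:
  assumes "(p::nat) < d" "q < d"
  shows "p * d + q < d * d"
proof -
  have "p * d + q < Suc p * d"
    using assms(2) by simp
  also have "\<dots> \<le> d * d"
    using assms(1) by (intro mult_le_mono1) simp
  finally show ?thesis .
qed

lemma div_less_of_less_square: "(r::nat) < d * d \<Longrightarrow> r div d < d"
  by (simp add: less_mult_imp_div_less)

lemma mod_less_of_less_square: "(r::nat) < d * d \<Longrightarrow> r mod d < d"
  by (cases "d = 0") auto

lemma sum_pair_index:
  "(\<Sum>r<(d::nat) * d. f (r div d) (r mod d)) = (\<Sum>p<d. \<Sum>q<d. f p q :: 'a::comm_monoid_add)"
proof -
  have bij: "bij_betw (\<lambda>(p, q). p * d + q) ({..<d} \<times> {..<d}) {..<d * d}"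
    by (rule bij_betw_byWitness[where f' = "\<lambda>r. (r div d, r mod d)"])
      (auto simp: pair_index_less div_less_of_less_square mod_less_of_less_square)
  have "(\<Sum>r<d * d. f (r div d) (r mod d))
      = (\<Sum>(p, q)\<in>{..<d} \<times> {..<d}. f ((p * d + q) div d) ((p * d + q) mod d))"
    using sum.reindex_bij_betw[OF bij, of "\<lambda>r. f (r div d) (r mod d)"] by (simp add: split_def)
  also have "\<dots> = (\<Sum>(p, q)\<in>{..<d} \<times> {..<d}. f p q)"
    by (intro sum.cong) auto
  finally show ?thesis
    by (simp add: sum.cartesian_product)
qed

definition swap_index :: "nat \<Rightarrow> nat \<Rightarrow> nat" where
  "swap_index d r = (r mod d) * d + r div d"

lemma swap_index_pair: "p < d \<Longrightarrow> q < d \<Longrightarrow> swap_index d (p * d + q) = q * d + p"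
  unfolding swap_index_def by auto

lemma swap_index_less: "r < d * d \<Longrightarrow> swap_index d r < d * d"
  unfolding swap_index_def
  by (simp add: pair_index_less div_less_of_less_square mod_less_of_less_square)

lemma swap_index_swap_index: "r < d * d \<Longrightarrow> swap_index d (swap_index d r) = r"
  using swap_index_pair[OF mod_less_of_less_square div_less_of_less_square, of r d]
  by (simp add: swap_index_def[of d r])

lemma tensor_vec_dim [simp]: "dim_vec (tensor_vec v w) = dim_vec v * dim_vec w"
  unfolding tensor_vec_def by simp

lemma tensor_vec_carrier:
  "v \<in> carrier_vec m \<Longrightarrow> w \<in> carrier_vec m' \<Longrightarrow> tensor_vec v w \<in> carrier_vec (m * m')"
  unfolding tensor_vec_def by auto

lemma tensor_vec_index:
  "v \<in> carrier_vec m \<Longrightarrow> w \<in> carrier_vec m' \<Longrightarrow> r < m * m' \<Longrightarrow>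
    tensor_vec v w $ r = v $ (r div m') * w $ (r mod m')"
  unfolding tensor_vec_def by auto

lemma tensor_vec_conjugate_index:
  assumes "v \<in> carrier_vec d" "w \<in> carrier_vec d" "r < d * d"
  shows "tensor_vec v (conjugate w) $ r = v $ (r div d) * cnj (w $ (r mod d))"
  using assms by (simp add: tensor_vec_def mod_less_of_less_square)

lemma kron_mat_outer:
  "kron_mat (outer a b) (outer c e) = outer (tensor_vec a c) (tensor_vec b e)"
proof (rule eq_matI)
  fix i j assume "i < dim_row (outer (tensor_vec a c) (tensor_vec b e))"
    "j < dim_col (outer (tensor_vec a c) (tensor_vec b e))"
  then have i: "i < dim_vec a * dim_vec c" and j: "j < dim_vec b * dim_vec e"
    by (auto simp: tensor_vec_def)
  have "0 < dim_vec c" "0 < dim_vec e"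
    using i j by (auto intro!: gr0I)
  with i j have "i div dim_vec c < dim_vec a" "j div dim_vec e < dim_vec b"
    "i mod dim_vec c < dim_vec c" "j mod dim_vec e < dim_vec e"
    by (simp_all add: less_mult_imp_div_less)
  with i j have "kron_mat (outer a b) (outer c e) $$ (i, j)
      = a $ (i div dim_vec c) * cnj (b $ (j div dim_vec e))
        * (c $ (i mod dim_vec c) * cnj (e $ (j mod dim_vec e)))"
    by (simp add: kron_mat_def)
  also have "\<dots> = outer (tensor_vec a c) (tensor_vec b e) $$ (i, j)"
    using i j by (simp add: tensor_vec_def mult_ac)
  finally show "kron_mat (outer a b) (outer c e) $$ (i, j)
    = outer (tensor_vec a c) (tensor_vec b e) $$ (i, j)" .
qed (auto simp: kron_mat_def)

lemma ptrans_add: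
  assumes "A \<in> carrier_mat (d * d) (d * d)" "B \<in> carrier_mat (d * d) (d * d)"
  shows "ptrans d (A + B) = ptrans d A + ptrans d B"
  using assms
  by (intro eq_matI) (auto simp: ptrans_def pair_index_less div_less_of_less_square
      mod_less_of_less_square)

lemma ptrans_zero: "ptrans d (0\<^sub>m (d * d) (d * d)) = 0\<^sub>m (d * d) (d * d)"
  by (intro eq_matI) (auto simp: ptrans_def pair_index_less div_less_of_less_square
      mod_less_of_less_square)

lemma ptrans_foldr_add:
  assumes "\<forall>x\<in>set xs. f x \<in> carrier_mat (d * d) (d * d)"
  shows "ptrans d (foldr (+) (map f xs) (0\<^sub>m (d * d) (d * d)))
    = foldr (+) (map (\<lambda>x. ptrans d (f x)) xs) (0\<^sub>m (d * d) (d * d))"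
  using assms by (induction xs) (auto simp: ptrans_zero ptrans_add foldr_add_carrier)

lemma ptrans_outer_tensor_vec:
  assumes v: "v \<in> carrier_vec d" and w: "w \<in> carrier_vec d"
  shows "ptrans d (outer (tensor_vec v w) (tensor_vec v w))
    = outer (tensor_vec v (conjugate w)) (tensor_vec v (conjugate w))"
proof (rule eq_matI)
  fix i j assume "i < dim_row (outer (tensor_vec v (conjugate w)) (tensor_vec v (conjugate w)))"
    "j < dim_col (outer (tensor_vec v (conjugate w)) (tensor_vec v (conjugate w)))"
  then have i: "i < d * d" and j: "j < d * d" using v w by auto
  let ?r = "(i div d) * d + j mod d" and ?c = "(j div d) * d + i mod d"
  have lt: "i div d < d" "j div d < d" "i mod d < d" "j mod d < d"
    using i j by (simp_all add: div_less_of_less_square mod_less_of_less_square)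
  then have "?r < d * d" "?c < d * d"
    by (simp_all add: pair_index_less)
  with i j v w have "ptrans d (outer (tensor_vec v w) (tensor_vec v w)) $$ (i, j)
      = tensor_vec v w $ ?r * cnj (tensor_vec v w $ ?c)"
    by (simp add: ptrans_def)
  also have "\<dots> = v $ (i div d) * w $ (j mod d) * cnj (v $ (j div d) * w $ (i mod d))"
    using v w lt \<open>?r < d * d\<close> \<open>?c < d * d\<close>
    by (simp add: tensor_vec_index)
  also have "\<dots> = (v $ (i div d) * cnj (w $ (i mod d)))
      * cnj (v $ (j div d) * cnj (w $ (j mod d)))"
    by (simp add: mult_ac)
  also have "\<dots> = outer (tensor_vec v (conjugate w)) (tensor_vec v (conjugate w)) $$ (i, j)"
    using v w i j by (simp add: tensor_vec_conjugate_index)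
  finally show "ptrans d (outer (tensor_vec v w) (tensor_vec v w)) $$ (i, j)
    = outer (tensor_vec v (conjugate w)) (tensor_vec v (conjugate w)) $$ (i, j)" .
qed (use v w in \<open>auto simp: ptrans_def\<close>)

lemma range_in_sym_swap_row:
  assumes sym: "range_in_sym d \<rho>" and \<rho>: "\<rho> \<in> carrier_mat (d * d) (d * d)"
    and r: "r < d * d" and c: "c < d * d"
  shows "\<rho> $$ (swap_index d r, c) = \<rho> $$ (r, c)"
proof -
  define y where "y = \<rho> *\<^sub>v unit_vec (d * d) c"
  have y: "y \<in> carrier_vec (d * d)" and y_index: "\<And>s. s < d * d \<Longrightarrow> y $ s = \<rho> $$ (s, c)"
    using \<rho> c unfolding y_def by auto
  have "y $ r = (flip_mat d *\<^sub>v y) $ r"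
    using sym c unfolding range_in_sym_def y_def by auto
  also have "\<dots> = (\<Sum>s<d * d. (if r = swap_index d s then 1 else 0) * y $ s)"
    using r y by (simp add: flip_mat_def scalar_prod_def atLeast0LessThan swap_index_def)
  also have "\<dots> = (\<Sum>s<d * d. if s = swap_index d r then y $ s else 0)"
    using r swap_index_swap_index swap_index_less by (intro sum.cong) auto
  also have "\<dots> = y $ swap_index d r"
    using swap_index_less[OF r] by simp
  finally show ?thesis
    using y_index r swap_index_less[OF r] by simp
qed

lemma sum_list_mult_cnj_eq_0:
  fixes f :: "'a \<Rightarrow> complex"
  assumes "sum_list (map (\<lambda>x. f x * cnj (f x)) xs) = 0" and "x \<in> set xs"
  shows "f x = 0"
proof -
  have "sum_list (map (\<lambda>x. f x * cnj (f x)) xs)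
      = complex_of_real (sum_list (map (\<lambda>x. (cmod (f x))\<^sup>2) xs))"
    by (induction xs) (simp_all add: complex_norm_square[symmetric] del: of_real_power)
  then have "sum_list (map (\<lambda>x. (cmod (f x))\<^sup>2) xs) = 0"
    using assms(1) by simp
  then show ?thesis
    using assms(2) by (subst (asm) sum_list_nonneg_eq_0_iff) auto
qed

lemma sum_outer_rows_eq_imp_entries_eq:
  assumes xs: "\<forall>x\<in>set xs. x \<in> carrier_vec N"
    and A: "A = foldr (+) (map (\<lambda>x. outer x x) xs) (0\<^sub>m N N)"
    and r: "r < N" "r' < N"
    and rows: "\<And>c. c < N \<Longrightarrow> A $$ (r', c) = A $$ (r, c)"
    and x: "x \<in> set xs"
  shows "x $ r' = x $ r"
proof -
  have A_index: "A $$ (i, j) = sum_list (map (\<lambda>x. x $ i * cnj (x $ j)) xs)"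
    if "i < N" "j < N" for i j
  proof -
    have "A $$ (i, j) = sum_list (map (\<lambda>x. outer x x $$ (i, j)) xs)"
      unfolding A using xs that by (intro foldr_add_index) auto
    also have "\<dots> = sum_list (map (\<lambda>x. x $ i * cnj (x $ j)) xs)"
      using xs that by (intro arg_cong[where f = sum_list] map_cong) auto
    finally show ?thesis .
  qed
  let ?g = "\<lambda>x. x $ r' - x $ r"
  have "sum_list (map (\<lambda>x. ?g x * cnj (?g x)) xs) = sum_list (map (\<lambda>x.
      x $ r' * cnj (x $ r') - x $ r' * cnj (x $ r) - x $ r * cnj (x $ r') + x $ r * cnj (x $ r)) xs)"
    by (intro arg_cong[where f = sum_list] map_cong) (simp_all add: algebra_simps)
  also have "\<dots> = A $$ (r', r') - A $$ (r', r) - A $$ (r, r') + A $$ (r, r)"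
    by (simp add: A_index r sum_list_addf sum_list_subtractf)
  also have "\<dots> = 0"
    using rows r by simp
  finally have "?g x = 0"
    by (rule sum_list_mult_cnj_eq_0[OF _ x])
  then show ?thesis by simp
qed

lemma separable_range_in_sym_decomposition:
  assumes sep: "separable d \<rho>" and sym: "range_in_sym d \<rho>"
  obtains vws where "\<forall>(v, w) \<in> set vws. v \<in> carrier_vec d \<and> w \<in> carrier_vec d"
    and "\<forall>(v, w) \<in> set vws. \<forall>p<d. \<forall>q<d. v $ p * w $ q = v $ q * w $ p"
    and "\<rho> = foldr (+) (map (\<lambda>(v, w). outer (tensor_vec v w) (tensor_vec v w)) vws)
      (0\<^sub>m (d * d) (d * d))"
proof -
  obtain vws where vws: "\<forall>(v, w) \<in> set vws. v \<in> carrier_vec d \<and> w \<in> carrier_vec d"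
    and \<rho>_kron: "\<rho> = foldr (+) (map (\<lambda>(v, w). kron_mat (outer v v) (outer w w)) vws)
      (0\<^sub>m (d * d) (d * d))"
    using sep unfolding separable_def by blast
  let ?xs = "map (\<lambda>(v, w). tensor_vec v w) vws"
  have xs: "\<forall>x\<in>set ?xs. x \<in> carrier_vec (d * d)"
    using vws by (auto simp: tensor_vec_carrier)
  have \<rho>_outer: "\<rho> = foldr (+) (map (\<lambda>(v, w). outer (tensor_vec v w) (tensor_vec v w)) vws)
      (0\<^sub>m (d * d) (d * d))"
    unfolding \<rho>_kron by (simp add: kron_mat_outer split_def)
  then have \<rho>_carrier: "\<rho> \<in> carrier_mat (d * d) (d * d)"
    using vws by (auto intro!: foldr_add_carrier outer_carrier tensor_vec_carrier)
  have "v $ p * w $ q = v $ q * w $ p"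
    if vw: "(v, w) \<in> set vws" and pq: "p < d" "q < d" for v w p q
  proof -
    have "tensor_vec v w $ swap_index d (p * d + q) = tensor_vec v w $ (p * d + q)"
    proof (rule sum_outer_rows_eq_imp_entries_eq[OF xs])
      show "\<rho> = foldr (+) (map (\<lambda>x. outer x x) ?xs) (0\<^sub>m (d * d) (d * d))"
        unfolding \<rho>_outer by (simp add: split_def o_def)
      show "\<rho> $$ (swap_index d (p * d + q), c) = \<rho> $$ (p * d + q, c)" if "c < d * d" for c
        using range_in_sym_swap_row[OF sym \<rho>_carrier _ that] pq by (simp add: pair_index_less)
    qed (use vw pq in \<open>auto simp: pair_index_less swap_index_less\<close>)
    then have "tensor_vec v w $ (q * d + p) = tensor_vec v w $ (p * d + q)"
      using pq by (simp only: swap_index_pair)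
    moreover have "v \<in> carrier_vec d" "w \<in> carrier_vec d"
      using vw vws by auto
    ultimately have "v $ q * w $ p = v $ p * w $ q"
      using pq by (simp add: tensor_vec_index pair_index_less)
    then show ?thesis by simp
  qed
  with vws \<rho>_outer show thesis
    by (intro that) auto
qed

lemma tensor_vec_conjugate_proportional:
  assumes v: "v \<in> carrier_vec d" and w: "w \<in> carrier_vec d"
    and sym: "\<And>p q. p < d \<Longrightarrow> q < d \<Longrightarrow> v $ p * w $ q = v $ q * w $ p"
  obtains c where "tensor_vec v (conjugate w) = c \<cdot>\<^sub>v tensor_vec v (conjugate v)"
proof -
  have "\<exists>l. \<forall>p<d. \<forall>q<d. v $ p * cnj (w $ q) = l * (v $ p * cnj (v $ q))"
  proof (cases "\<exists>p0<d. v $ p0 \<noteq> 0")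
    case True
    then obtain p0 where p0: "p0 < d" "v $ p0 \<noteq> 0" by blast
    have "w $ q = w $ p0 / v $ p0 * v $ q" if "q < d" for q
      using sym[OF p0(1) that] p0(2) by (simp add: field_simps)
    then show ?thesis
      by (intro exI[of _ "cnj (w $ p0 / v $ p0)"]) auto
  qed auto
  then obtain l
    where l: "\<And>p q. p < d \<Longrightarrow> q < d \<Longrightarrow> v $ p * cnj (w $ q) = l * (v $ p * cnj (v $ q))"
    by blast
  have "tensor_vec v (conjugate w) = l \<cdot>\<^sub>v tensor_vec v (conjugate v)"
  proof (rule eq_vecI)
    fix r assume "r < dim_vec (l \<cdot>\<^sub>v tensor_vec v (conjugate v))"
    then have r: "r < d * d" using v by simp
    then show "tensor_vec v (conjugate w) $ r = (l \<cdot>\<^sub>v tensor_vec v (conjugate v)) $ r"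
      using v w l[OF div_less_of_less_square mod_less_of_less_square, of r]
      by (simp add: tensor_vec_conjugate_index)
  qed (use v w in simp)
  then show thesis by (rule that)
qed

lemma K_mat_carrier: "K_mat n d u \<in> carrier_mat n (d * d)"
  unfolding K_mat_def by auto

lemma K_mat_mult_tensor_vec:
  assumes u: "\<And>i. i < n \<Longrightarrow> u i \<in> carrier_vec d"
    and v: "v \<in> carrier_vec d" and w: "w \<in> carrier_vec d"
  shows "K_mat n d u *\<^sub>v tensor_vec v (conjugate w)
    = vec n (\<lambda>i. (v \<bullet>c u i) * cnj (w \<bullet>c u i))"
proof (rule eq_vecI)
  fix i assume "i < dim_vec (vec n (\<lambda>i. (v \<bullet>c u i) * cnj (w \<bullet>c u i)))"
  then have i: "i < n" by simp
  have ui: "u i \<in> carrier_vec d" using u i by auto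
  have K: "K_mat n d u $$ (i, r) = cnj (u i $ (r div d)) * u i $ (r mod d)" if "r < d * d" for r
    using i that by (simp add: K_mat_def tensor_vec_conjugate_index[OF ui ui])
  have "(K_mat n d u *\<^sub>v tensor_vec v (conjugate w)) $ i
      = (\<Sum>r<d * d. K_mat n d u $$ (i, r) * tensor_vec v (conjugate w) $ r)"
    using i v w by (simp add: K_mat_def scalar_prod_def atLeast0LessThan)
  also have "\<dots> = (\<Sum>r<d * d.
      (v $ (r div d) * cnj (u i $ (r div d))) * (cnj (w $ (r mod d)) * u i $ (r mod d)))"
    using v w by (intro sum.cong) (simp_all add: K tensor_vec_conjugate_index)
  also have "\<dots> = (\<Sum>p<d. \<Sum>q<d. (v $ p * cnj (u i $ p)) * (cnj (w $ q) * u i $ q))"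
    by (rule sum_pair_index)
  also have "\<dots> = (v \<bullet>c u i) * cnj (w \<bullet>c u i)"
    using v w ui by (simp add: scalar_prod_def atLeast0LessThan sum_product)
  finally show "(K_mat n d u *\<^sub>v tensor_vec v (conjugate w)) $ i
      = vec n (\<lambda>i. (v \<bullet>c u i) * cnj (w \<bullet>c u i)) $ i"
    using i by simp
qed (simp add: K_mat_def)

lemma R1_DNN_zero: "0\<^sub>m n n \<in> R1_DNN n"
  unfolding R1_DNN_def by (intro CollectI exI[of _ "[]"]) simp

lemma R1_DNN_generator:
  assumes "c \<ge> 0" "M \<in> DNN n" "vec_space.rank n M = 1"
  shows "complex_of_real c \<cdot>\<^sub>m M \<in> R1_DNN n"
proof -
  have "M \<in> carrier_mat n n"
    using assms(2) by (simp add: DNN_def psd_mat_def)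
  then show ?thesis
    unfolding R1_DNN_def using assms by (intro CollectI exI[of _ "[(c, M)]"]) auto
qed

lemma R1_DNN_carrier: "A \<in> R1_DNN n \<Longrightarrow> A \<in> carrier_mat n n"
  unfolding R1_DNN_def DNN_def psd_mat_def by (auto intro!: foldr_add_carrier)

lemma R1_DNN_add:
  assumes A: "A \<in> R1_DNN n" and B: "B \<in> R1_DNN n"
  shows "A + B \<in> R1_DNN n"
proof -
  let ?f = "\<lambda>(c, M). complex_of_real c \<cdot>\<^sub>m M"
  let ?gen = "\<lambda>Ms. \<forall>(c, M) \<in> set Ms. c \<ge> 0 \<and> M \<in> DNN n \<and> vec_space.rank n M = 1"
  obtain Ms where Ms: "?gen Ms" and A_eq: "A = foldr (+) (map ?f Ms) (0\<^sub>m n n)"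
    using A unfolding R1_DNN_def by blast
  obtain Ms' where Ms': "?gen Ms'" and B_eq: "B = foldr (+) (map ?f Ms') (0\<^sub>m n n)"
    using B unfolding R1_DNN_def by blast
  have "\<forall>x\<in>set Ms. ?f x \<in> carrier_mat n n"
    using Ms by (auto simp: DNN_def psd_mat_def)
  then have "A + B = foldr (+) (map ?f Ms) B"
    unfolding A_eq using R1_DNN_carrier[OF B] by (rule foldr_add_init[symmetric])
  also have "\<dots> = foldr (+) (map ?f (Ms @ Ms')) (0\<^sub>m n n)"
    unfolding B_eq by simp
  finally have "A + B = foldr (+) (map ?f (Ms @ Ms')) (0\<^sub>m n n)" .
  moreover have "?gen (Ms @ Ms')"
    using Ms Ms' by auto
  ultimately show ?thesis
    unfolding R1_DNN_def by blast
qed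

lemma R1_DNN_foldr_add:
  "\<forall>x\<in>set xs. f x \<in> R1_DNN n \<Longrightarrow> foldr (+) (map f xs) (0\<^sub>m n n) \<in> R1_DNN n"
  by (induction xs) (auto simp: R1_DNN_zero R1_DNN_add)

lemma smult_outer_nonneg_in_R1_DNN:
  assumes c: "c \<ge> 0" and a: "\<And>i. i < n \<Longrightarrow> a i \<ge> 0"
  defines "z \<equiv> vec n (\<lambda>i. complex_of_real (a i))"
  shows "complex_of_real c \<cdot>\<^sub>m outer z z \<in> R1_DNN n"
proof (cases "z = 0\<^sub>v n")
  case True
  then have "complex_of_real c \<cdot>\<^sub>m outer z z = 0\<^sub>m n n"
    by (intro eq_matI) auto
  then show ?thesis by (simp add: R1_DNN_zero)
next
  case False
  have z: "z \<in> carrier_vec n" unfolding z_def by simp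
  have "cnonneg (outer z z $$ (i, j))" if "i < n" "j < n" for i j
    using that a by (simp add: z_def cnonneg_def)
  then have "outer z z \<in> DNN n"
    using outer_psd[OF z] by (simp add: DNN_def)
  with c False z show ?thesis
    by (intro R1_DNN_generator rank_outer_self)
qed

lemma K_mat_ptrans_symmetric_product_in_R1_DNN:
  assumes u: "\<And>i. i < n \<Longrightarrow> u i \<in> carrier_vec d"
    and v: "v \<in> carrier_vec d" and w: "w \<in> carrier_vec d"
    and sym: "\<And>p q. p < d \<Longrightarrow> q < d \<Longrightarrow> v $ p * w $ q = v $ q * w $ p"
  shows "K_mat n d u * ptrans d (outer (tensor_vec v w) (tensor_vec v w)) * mat_adjoint (K_mat n d u)
    \<in> R1_DNN n"
proof -
  let ?K = "K_mat n d u"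
  obtain c where c: "tensor_vec v (conjugate w) = c \<cdot>\<^sub>v tensor_vec v (conjugate v)"
    using tensor_vec_conjugate_proportional[OF v w sym] by blast
  define z where "z = vec n (\<lambda>i. complex_of_real ((cmod (v \<bullet>c u i))\<^sup>2))"
  have x: "tensor_vec v (conjugate w) \<in> carrier_vec (d * d)"
    and xv: "tensor_vec v (conjugate v) \<in> carrier_vec (d * d)"
    using v w by (simp_all add: tensor_vec_carrier)
  have "?K *\<^sub>v tensor_vec v (conjugate v) = z"
    using K_mat_mult_tensor_vec[OF u v v]
    by (simp add: z_def complex_norm_square del: of_real_power)
  then have "?K *\<^sub>v tensor_vec v (conjugate w) = c \<cdot>\<^sub>v z"
    unfolding c using mult_mat_vec[OF K_mat_carrier xv] by simp
  then have "?K * ptrans d (outer (tensor_vec v w) (tensor_vec v w)) * mat_adjoint ?K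
      = outer (c \<cdot>\<^sub>v z) (c \<cdot>\<^sub>v z)"
    by (simp add: ptrans_outer_tensor_vec[OF v w] mult_outer_mult_adjoint[OF K_mat_carrier x])
  also have "\<dots> = complex_of_real ((cmod c)\<^sup>2) \<cdot>\<^sub>m outer z z"
    by (simp add: outer_smult complex_norm_square del: of_real_power)
  also have "\<dots> \<in> R1_DNN n"
    unfolding z_def by (rule smult_outer_nonneg_in_R1_DNN) auto
  finally show ?thesis .
qed

theorem mainTheorem12:
  fixes n d :: nat and u :: "nat \<Rightarrow> complex vec" and \<rho> :: "complex mat"
  assumes "n \<le> d"
    and "\<And>i. i < n \<Longrightarrow> u i \<in> carrier_vec d"
    and "\<And>i j. i < n \<Longrightarrow> j < n \<Longrightarrow> u i \<bullet>c u j = (if i = j then 1 else 0)"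
    and "psd_mat (d*d) \<rho>"
    and "separable d \<rho>"
    and "range_in_sym d \<rho>"
  shows "K_mat n d u * ptrans d \<rho> * mat_adjoint (K_mat n d u) \<in> R1_DNN n"
proof -
  let ?K = "K_mat n d u"
  obtain vws where vws: "\<forall>(v, w) \<in> set vws. v \<in> carrier_vec d \<and> w \<in> carrier_vec d"
    and sym: "\<forall>(v, w) \<in> set vws. \<forall>p<d. \<forall>q<d. v $ p * w $ q = v $ q * w $ p"
    and \<rho>: "\<rho> = foldr (+) (map (\<lambda>(v, w). outer (tensor_vec v w) (tensor_vec v w)) vws)
      (0\<^sub>m (d * d) (d * d))"
    using separable_range_in_sym_decomposition[OF assms(5,6)] by blast
  let ?P = "\<lambda>(v, w). ptrans d (outer (tensor_vec v w) (tensor_vec v w))"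
  have "?K * ptrans d \<rho> * mat_adjoint ?K
      = ?K * foldr (+) (map ?P vws) (0\<^sub>m (d * d) (d * d)) * mat_adjoint ?K"
    unfolding \<rho> using vws
    by (subst ptrans_foldr_add) (auto intro!: outer_carrier tensor_vec_carrier simp: split_def)
  also have "\<dots> = foldr (+) (map (\<lambda>x. ?K * ?P x * mat_adjoint ?K) vws) (0\<^sub>m n n)"
    using vws by (intro mult_foldr_add_mult_adjoint[OF K_mat_carrier]) (auto simp: ptrans_def)
  also have "\<dots> \<in> R1_DNN n"
    using vws sym
    by (intro R1_DNN_foldr_add) (auto intro!: K_mat_ptrans_symmetric_product_in_R1_DNN assms(2))
  finally show ?thesis .
qed

end
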